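(* There is $\delta_0>0$ such that for every $\delta\in(0,\delta_0]$, every $s\ge s_0$ and every $X\in\mathcal X(s)$, $$X\le \alpha_1X+\sum_{l=1}^Le^{(\alpha_1-\alpha_l)s}\Psi_{i_l}\big(e^{(\alpha_l-\alpha_1)s}(X-Y_l(s))\big).$$
   Context: For a positive integer $i$, $\Psi_i:\mathbb R\to\mathbb R$ denotes the odd, strictly decreasing, analytic solution of $-\frac{1}{2i}\Psi_i+\frac{2i+1}{2i}X\Psi_i'(X)+\Psi_i(X)\Psi_i'(X)=0$ satisfying $\Psi_i(X)=-X+X^{2i+1}+O(X^{4i+1})$ as $X\to0$. It satisfies $\Psi_i(X)=-\operatorname{sgn}(X)|X|^{\frac1{2i+1}}+O(|X|^{-1+\frac{2}{2i+1}})$ as $|X|\to\infty$, and $|\Psi_i(X)|\approx |X|(1+|X|)^{\frac1{2i+1}-1}$. Fix an integer $L\ge2$ and positive integers $i_1,\dots,i_L$; let $\alpha_l=1+\frac1{2i_l}$. Let $\delta\in(0,1)$ and $s_0=-\log\delta$. For $l=1,\dots,L$ put $y_{l,0}=3(l-1)\delta^{1/(2i_1)}$, $h_l=\sum_{l'=1}^L\delta^{\frac1{2i_{l'}}}\Big(\Psi_{i_{l'}}\big(\tfrac{y_{l,0}-y_{l',0}}{\delta^{\alpha_{l'}}}\big)-\Psi_{i_{l'}}\big(\tfrac{-y_{l',0}}{\delta^{\alpha_{l'}}}\big)\Big)$, and for $s\ge s_0$ let $Y_l(s)=e^{\alpha_1 s}\big(y_{l,0}+(\delta-e^{-s})h_l\big)$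 (so $Y_1\equiv0$). Let $\mathcal X(s)=\{X\in\mathbb R: e^s\le X\le 2\delta^{1/(2i_1)}e^{\alpha_1 s}\}$. *)

theory Defs
  imports "HOL-Analysis.Analysis" "HOL-Library.Landau_Symbols"
begin

definition real_analytic :: "(real \<Rightarrow> real) \<Rightarrow> bool" where
  "real_analytic f \<longleftrightarrow>
     (\<forall>x. \<exists>r>0. \<exists>a::nat \<Rightarrow> real. \<forall>y. \<bar>y - x\<bar> < r \<longrightarrow> (\<lambda>n. a n * (y - x) ^ n) sums f y)"

definition Psi :: "nat \<Rightarrow> real \<Rightarrow> real" where
  "Psi k = (THE f.
      (\<forall>x. f (-x) = - f x) \<and>
      (\<forall>x y. x < y \<longrightarrow> f y < f x) \<and>
      real_analytic f \<and>
      (\<forall>x. \<exists>d. (f has_real_derivative d) (at x) \<and>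
            -(1 / (2 * real k)) * f x + ((2 * real k + 1) / (2 * real k)) * x * d + f x * d = 0) \<and>
      (\<lambda>x. f x - (- x + x ^ (2 * k + 1))) \<in> O[at 0](\<lambda>x. x ^ (4 * k + 1)))"

definition alpha :: "nat \<Rightarrow> real" where
  "alpha k = 1 + 1 / (2 * real k)"

definition y0 :: "(nat \<Rightarrow> nat) \<Rightarrow> real \<Rightarrow> nat \<Rightarrow> real" where
  "y0 i \<delta> l = 3 * (real l - 1) * \<delta> powr (1 / (2 * real (i 1)))"

definition hcoef :: "nat \<Rightarrow> (nat \<Rightarrow> nat) \<Rightarrow> real \<Rightarrow> nat \<Rightarrow> real" where
  "hcoef L i \<delta> l = (\<Sum>l'=1..L. \<delta> powr (1 / (2 * real (i l'))) *
      (Psi (i l') ((y0 i \<delta> l - y0 i \<delta> l') / \<delta> powr alpha (i l'))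
       - Psi (i l') (- y0 i \<delta> l' / \<delta> powr alpha (i l'))))"

definition Ypos :: "nat \<Rightarrow> (nat \<Rightarrow> nat) \<Rightarrow> real \<Rightarrow> nat \<Rightarrow> real \<Rightarrow> real" where
  "Ypos L i \<delta> l s = exp (alpha (i 1) * s) * (y0 i \<delta> l + (\<delta> - exp (- s)) * hcoef L i \<delta> l)"

end

theory Submission
  imports Defs "HOL-Complex_Analysis.Complex_Analysis"
begin

text \<open>The profile Psi_k is the inverse of y |-> -y - y^(2k+1): this inverse has all the
  defining properties, and nothing else has them, because (x + f x) / f(x)^(2k+1) is a first
  integral of the ODE whose value -1 is forced by the expansion at 0.
  Hence Psi_k is nonnegative on the negative half-line, Psi_k(X) >= -X/(2k) for X >= 4k, and
  delta^(1/(2k)) Psi_k(a / delta^alpha_k) is bounded by max 1 |a|, so the coefficients h_l are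
  bounded independently of delta. For small delta this gives
  Y_l(s) >= 2 delta^(1/(2 i_1)) e^(alpha_1 s) >= X for l >= 2, so those terms are nonnegative,
  while the term l = 1 is Psi_(i_1)(X) >= -X/(2 i_1) = X - alpha_1 X since X >= e^s >= 1/delta.\<close>

lemma odd_power_strict_mono:
  fixes x y :: real
  assumes "odd n" "x < y"
  shows "x ^ n < y ^ n"
proof -
  have "root n (x ^ n) < root n (y ^ n)"
    using assms by (simp add: odd_real_root_power_cancel)
  moreover have "n > 0" using assms(1) by (rule odd_pos)
  ultimately show ?thesis by simp
qed

definition Psi_inv :: "nat \<Rightarrow> 'a::comm_ring_1 \<Rightarrow> 'a" where
  "Psi_inv k y = - y - y ^ (2 * k + 1)"

lemma Psi_inv_minus: "Psi_inv k (- y) = - Psi_inv k y"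
proof -
  have "(- y) ^ (2 * k + 1) = - (y ^ (2 * k + 1))" by (rule power_minus_odd) simp
  then show ?thesis by (simp add: Psi_inv_def)
qed

lemma Psi_inv_strict_antimono: "(y::real) < z \<Longrightarrow> Psi_inv k z < Psi_inv k y"
  unfolding Psi_inv_def using odd_power_strict_mono[of "2 * k + 1" y z] by simp

lemma inj_Psi_inv: "inj (Psi_inv k :: real \<Rightarrow> real)"
  by (rule injI) (metis Psi_inv_strict_antimono less_irrefl linorder_neqE_linordered_idom)

lemma continuous_Psi_inv: "isCont (Psi_inv k :: real \<Rightarrow> real) y"
  unfolding Psi_inv_def by (intro continuous_intros)

lemma surj_Psi_inv: "surj (Psi_inv k :: real \<Rightarrow> real)"
  unfolding surj_def
proof
  fix x :: real
  define M where "M = \<bar>x\<bar> + 1"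
  have "0 \<le> M ^ (2 * k + 1)" by (simp add: M_def)
  then have "Psi_inv k M \<le> x" "x \<le> Psi_inv k (- M)"
    unfolding Psi_inv_minus unfolding Psi_inv_def M_def by linarith+
  then show "\<exists>y. x = Psi_inv k y"
    using IVT2[of "Psi_inv k" M x "- M"] continuous_Psi_inv by (force simp: M_def)
qed

definition Psi_implicit :: "nat \<Rightarrow> real \<Rightarrow> real" where
  "Psi_implicit k = inv (Psi_inv k)"

lemma Psi_inv_Psi_implicit [simp]: "Psi_inv k (Psi_implicit k x) = x"
  unfolding Psi_implicit_def by (rule surj_f_inv_f[OF surj_Psi_inv])

lemma Psi_implicit_Psi_inv [simp]: "Psi_implicit k (Psi_inv k y) = y"
  unfolding Psi_implicit_def by (rule inv_f_f[OF inj_Psi_inv])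

lemma Psi_implicit_eqI: "Psi_inv k y = x \<Longrightarrow> Psi_implicit k x = y"
  by auto

lemma Psi_implicit_strict_antimono: "x < y \<Longrightarrow> Psi_implicit k y < Psi_implicit k x"
  by (metis Psi_inv_Psi_implicit Psi_inv_strict_antimono not_less_iff_gr_or_eq order.asym)

lemma Psi_implicit_minus: "Psi_implicit k (- x) = - Psi_implicit k x"
  by (rule Psi_implicit_eqI) (simp add: Psi_inv_minus)

lemma Psi_implicit_0 [simp]: "Psi_implicit k 0 = 0"
  by (rule Psi_implicit_eqI) (simp add: Psi_inv_def)

lemma Psi_implicit_nonneg: "x \<le> 0 \<Longrightarrow> 0 \<le> Psi_implicit k x"
  using Psi_implicit_strict_antimono[of x 0 k] by (cases "x = 0") auto

lemma abs_eq_abs_Psi_implicit: "\<bar>x\<bar> = \<bar>Psi_implicit k x\<bar> + \<bar>Psi_implicit k x\<bar> ^ (2 * k + 1)"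
proof -
  define p where "p = Psi_implicit k x"
  have "x = - (p + p ^ (2 * k + 1))"
    using Psi_inv_Psi_implicit[of k x] by (simp add: Psi_inv_def p_def)
  moreover have "p ^ (2 * k + 1) \<ge> 0 \<longleftrightarrow> p \<ge> 0" by (rule zero_le_odd_power) simp
  ultimately have "\<bar>x\<bar> = \<bar>p\<bar> + \<bar>p ^ (2 * k + 1)\<bar>" by linarith
  then show ?thesis by (simp only: p_def power_abs)
qed

lemma abs_Psi_implicit_le: "\<bar>Psi_implicit k x\<bar> \<le> \<bar>x\<bar>"
  using abs_eq_abs_Psi_implicit[of x k] by (simp add: add_increasing2)

lemma abs_Psi_implicit_power_le: "\<bar>Psi_implicit k x\<bar> ^ (2 * k + 1) \<le> \<bar>x\<bar>"
  using abs_eq_abs_Psi_implicit[of x k] by simp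

lemma isCont_Psi_implicit: "isCont (Psi_implicit k) x"
proof -
  have "isCont (Psi_implicit k) (Psi_inv k (Psi_implicit k x))"
    by (rule isCont_inverse_function[where d=1]) (auto simp: continuous_Psi_inv)
  then show ?thesis by simp
qed

lemma DERIV_Psi_inv: "(Psi_inv k has_field_derivative (- 1 - of_nat (2 * k + 1) * y ^ (2 * k))) (at y)"
  unfolding Psi_inv_def by (rule derivative_eq_intros refl | simp)+

lemma DERIV_Psi_implicit:
  "(Psi_implicit k has_real_derivative inverse (- 1 - real (2 * k + 1) * Psi_implicit k x ^ (2 * k))) (at x)"
proof (rule DERIV_inverse_function[where f="Psi_inv k" and a="x - 1" and b="x + 1"])
  have "0 \<le> real (2 * k + 1) * Psi_implicit k x ^ (2 * k)" by simp
  then show "- 1 - real (2 * k + 1) * Psi_implicit k x ^ (2 * k) \<noteq> 0" by linarith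
  show "(Psi_inv k has_real_derivative - 1 - real (2 * k + 1) * Psi_implicit k x ^ (2 * k))
    (at (Psi_implicit k x))" by (rule DERIV_Psi_inv)
qed (auto simp: isCont_Psi_implicit)

lemma Psi_implicit_ode:
  assumes "k > 0"
  shows "\<exists>d. (Psi_implicit k has_real_derivative d) (at x) \<and>
    -(1 / (2 * real k)) * Psi_implicit k x + ((2 * real k + 1) / (2 * real k)) * x * d + Psi_implicit k x * d = 0"
proof -
  define p where "p = Psi_implicit k x"
  define D where "D = - 1 - real (2 * k + 1) * p ^ (2 * k)"
  have "0 \<le> real (2 * k + 1) * p ^ (2 * k)" by simp
  then have "D \<noteq> 0" unfolding D_def by linarith
  have x: "x = - p - p * p ^ (2 * k)"
    using Psi_inv_Psi_implicit[of k x] by (simp add: Psi_inv_def p_def)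
  have "-(1 / (2 * real k)) * p + ((2 * real k + 1) / (2 * real k)) * x * inverse D + p * inverse D
      = (- p * D + (2 * real k + 1) * x + 2 * real k * p) / (2 * real k * D)"
    using \<open>D \<noteq> 0\<close> assms by (simp add: field_simps)
  also have "- p * D + (2 * real k + 1) * x + 2 * real k * p = 0"
    unfolding x D_def by (simp add: algebra_simps)
  finally have "-(1 / (2 * real k)) * p + ((2 * real k + 1) / (2 * real k)) * x * inverse D
      + p * inverse D = 0" by simp
  moreover have "(Psi_implicit k has_real_derivative inverse D) (at x)"
    unfolding D_def p_def by (rule DERIV_Psi_implicit)
  ultimately show ?thesis unfolding p_def by blast
qed

lemma abs_power_diff_le:
  fixes x y M :: real
  assumes "\<bar>x\<bar> \<le> M" "\<bar>y\<bar> \<le> M"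
  shows "\<bar>x ^ n - y ^ n\<bar> \<le> n * M ^ (n - 1) * \<bar>x - y\<bar>"
proof -
  have "\<bar>\<Sum>i<n. y ^ (n - Suc i) * x ^ i\<bar> \<le> (\<Sum>i<n. M ^ (n - Suc i) * M ^ i)"
    using assms by (intro sum_abs[THEN order_trans] sum_mono)
      (auto simp: abs_mult power_abs intro!: mult_mono power_mono)
  also have "\<dots> = n * M ^ (n - 1)"
    by (simp add: power_add[symmetric])
  finally show ?thesis
    by (simp add: power_diff_sumr2 abs_mult mult.commute mult_left_mono)
qed

lemma abs_Psi_impliciticit_expansion_le:
  "\<bar>Psi_implicit k x - (- x + x ^ (2 * k + 1))\<bar> \<le> real (2 * k + 1) * \<bar>x\<bar> ^ (4 * k + 1)"
proof -
  define p where "p = Psi_implicit k x"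
  have x: "x = - p - p ^ (2 * k + 1)"
    using Psi_inv_Psi_implicit[of k x] by (simp add: Psi_inv_def p_def)
  have "(- p) ^ (2 * k + 1) = - (p ^ (2 * k + 1))" by (rule power_minus_odd) simp
  then have "\<bar>p - (- x + x ^ (2 * k + 1))\<bar> = \<bar>(- p) ^ (2 * k + 1) - x ^ (2 * k + 1)\<bar>"
    using x by simp
  also have "\<dots> \<le> real (2 * k + 1) * \<bar>x\<bar> ^ (2 * k) * \<bar>- p - x\<bar>"
    using abs_power_diff_le[of "- p" "\<bar>x\<bar>" x "2 * k + 1"] abs_Psi_implicit_le[of k x]
    by (simp add: p_def)
  also have "\<bar>- p - x\<bar> = \<bar>p\<bar> ^ (2 * k + 1)"
    using x by (simp add: abs_mult power_abs)
  also have "\<dots> \<le> \<bar>x\<bar> ^ (2 * k + 1)"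
    using abs_Psi_implicit_le[of k x] by (intro power_mono) (auto simp: p_def)
  also have "real (2 * k + 1) * \<bar>x\<bar> ^ (2 * k) * \<bar>x\<bar> ^ (2 * k + 1)
      = real (2 * k + 1) * \<bar>x\<bar> ^ (4 * k + 1)"
    by (simp add: mult.assoc flip: power_add)
  finally show ?thesis
    by (simp add: p_def mult_left_mono)
qed

lemma Psi_implicit_bigo:
  "(\<lambda>x. Psi_implicit k x - (- x + x ^ (2 * k + 1))) \<in> O[at 0](\<lambda>x. x ^ (4 * k + 1))"
  using abs_Psi_impliciticit_expansion_le[of k]
  by (intro bigoI[where c="real (2 * k + 1)"] always_eventually allI) (simp only: real_norm_def power_abs)

lemma real_analytic_inverse_of_entire:
  fixes H :: "complex \<Rightarrow> complex" and h g :: "real \<Rightarrow> real"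
  assumes holo: "H holomorphic_on UNIV"
    and real: "\<And>y. H (of_real y) = of_real (h y)"
    and inverse: "\<And>x. h (g x) = x"
    and cont: "\<And>x. isCont g x"
    and deriv: "\<And>x. deriv H (of_real (g x)) \<noteq> 0"
  shows "real_analytic g"
  unfolding real_analytic_def
proof
  \<comment> \<open>The local holomorphic inverse G of H extends g near x0, so g is the real part of
    the Taylor series of G at x0.\<close>
  fix x0 :: real
  define \<xi> where "\<xi> = (of_real (g x0) :: complex)"
  obtain r where r: "r > 0" "open (H ` ball \<xi> r)" "inj_on H (ball \<xi> r)"
    using has_complex_derivative_locally_invertible[OF holo _ _ deriv[of x0]] by (auto simp: \<xi>_def)
  obtain G where G: "G holomorphic_on H ` ball \<xi> r" "\<And>z. z \<in> ball \<xi> r \<Longrightarrow> G (H z) = z"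
    using holomorphic_has_inverse[OF holomorphic_on_subset[OF holo] open_ball r(3)] by blast
  have "of_real x0 \<in> H ` ball \<xi> r"
    using r(1) by (intro image_eqI[of _ _ \<xi>]) (auto simp: \<xi>_def real inverse)
  then obtain \<rho> where \<rho>: "\<rho> > 0" "ball (of_real x0) \<rho> \<subseteq> H ` ball \<xi> r"
    using r(2) openE by blast
  obtain \<epsilon> where \<epsilon>: "\<epsilon> > 0" "\<And>y. dist y x0 < \<epsilon> \<Longrightarrow> dist (g y) (g x0) < r"
    using cont[of x0] r(1) unfolding continuous_at_eps_delta by blast
  define R where "R = min \<rho> \<epsilon>"
  define c where "c = (\<lambda>n. (deriv ^^ n) G (of_real x0) / fact n)"
  have holG: "G holomorphic_on ball (of_real x0) R"
    using \<rho>(2) by (intro holomorphic_on_subset[OF G(1)]) (auto simp: R_def)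
  show "\<exists>r>0. \<exists>a. \<forall>y. \<bar>y - x0\<bar> < r \<longrightarrow> (\<lambda>n. a n * (y - x0) ^ n) sums g y"
  proof (intro exI conjI allI impI)
    show "R > 0" using \<rho> \<epsilon> by (simp add: R_def)
    fix y assume y: "\<bar>y - x0\<bar> < R"
    have "(of_real y :: complex) \<in> ball (of_real x0) R"
      using y by (simp add: dist_norm norm_minus_commute flip: of_real_diff)
    then have S: "(\<lambda>n. c n * (of_real y - of_real x0) ^ n) sums G (of_real y)"
      unfolding c_def by (rule holomorphic_power_series[OF holG])
    have "dist (g y) (g x0) < r" using y \<epsilon>(2)[of y] by (simp add: R_def dist_real_def)
    then have "(of_real (g y) :: complex) \<in> ball \<xi> r"
      by (simp add: \<xi>_def dist_norm norm_minus_commute flip: of_real_diff)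
    then have "G (of_real y) = of_real (g y)"
      using G(2) by (metis real inverse)
    then show "(\<lambda>n. Re (c n) * (y - x0) ^ n) sums g y"
      using sums_Re[OF S] by (simp flip: of_real_diff of_real_power)
  qed
qed

lemma real_analytic_Psi_implicit: "real_analytic (Psi_implicit k)"
proof (rule real_analytic_inverse_of_entire)
  show "Psi_inv k holomorphic_on UNIV" unfolding Psi_inv_def by (intro holomorphic_intros)
  show "Psi_inv k (of_real y) = of_real (Psi_inv k y)" for y by (simp add: Psi_inv_def)
  fix x
  have "0 \<le> real (2 * k + 1) * Psi_implicit k x ^ (2 * k)" by simp
  then have "- 1 - real (2 * k + 1) * Psi_implicit k x ^ (2 * k) \<noteq> 0" by linarith
  moreover have "deriv (Psi_inv k) (of_real (Psi_implicit k x))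
      = (of_real (- 1 - real (2 * k + 1) * Psi_implicit k x ^ (2 * k)) :: complex)"
    by (simp add: DERIV_imp_deriv[OF DERIV_Psi_inv])
  ultimately show "deriv (Psi_inv k) (of_real (Psi_implicit k x)) \<noteq> (0::complex)"
    by (metis of_real_eq_0_iff)
qed (simp_all add: isCont_Psi_implicit)

lemma bigo_power_div_tendsto_0:
  fixes r :: "real \<Rightarrow> real"
  assumes "r \<in> O[at 0](\<lambda>x. x ^ m)" "j < m"
  shows "((\<lambda>x. r x / x ^ j) \<longlongrightarrow> 0) (at 0)"
proof -
  obtain c where c: "eventually (\<lambda>x. norm (r x) \<le> c * norm (x ^ m)) (at 0)"
    using landau_o.bigE[OF assms(1)] by blast
  then have bound: "eventually (\<lambda>x. norm (r x / x ^ j) \<le> c * \<bar>x\<bar> ^ (m - j)) (at 0)"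
    using eventually_neq_at_within[of 0 0 UNIV]
  proof eventually_elim
    case (elim x)
    have "\<bar>x\<bar> ^ m = \<bar>x\<bar> ^ (m - j) * \<bar>x\<bar> ^ j"
      using assms(2) by (simp flip: power_add)
    with elim show ?case
      by (simp add: abs_divide divide_le_eq power_abs mult.assoc)
  qed
  have "((\<lambda>x. c * \<bar>x\<bar> ^ (m - j)) \<longlongrightarrow> c * \<bar>0\<bar> ^ (m - j)) (at 0)"
    by (intro tendsto_intros)
  then have "((\<lambda>x. c * \<bar>x\<bar> ^ (m - j)) \<longlongrightarrow> 0) (at (0::real))"
    using assms(2) by (simp add: zero_power)
  with bound show ?thesis by (rule Lim_null_comparison)
qed

lemma Psi_ode_first_integral:
  fixes f :: "real \<Rightarrow> real"
  assumes k: "k > 0"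
    and ode: "\<forall>x. \<exists>d. (f has_real_derivative d) (at x) \<and>
            -(1 / (2 * real k)) * f x + ((2 * real k + 1) / (2 * real k)) * x * d + f x * d = 0"
    and nonzero: "\<And>x. x > 0 \<Longrightarrow> f x \<noteq> 0"
  shows "\<exists>C. \<forall>x>0. x + f x = C * f x ^ (2 * k + 1)"
proof -
  define n where "n = 2 * k + 1"
  have "\<exists>C. \<forall>x\<in>{0<..}. (x + f x) / f x ^ n = C"
  proof (rule has_field_derivative_zero_constant)
    fix x :: real assume "x \<in> {0<..}"
    then have fx: "f x \<noteq> 0" using nonzero by simp
    obtain d where d: "(f has_real_derivative d) (at x)"
      and e: "-(1 / (2 * real k)) * f x + ((2 * real k + 1) / (2 * real k)) * x * d + f x * d = 0"
      using ode by blast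
    have "(1 + d) * f x - (2 * real k + 1) * (x + f x) * d
        = - 2 * real k * (-(1 / (2 * real k)) * f x + ((2 * real k + 1) / (2 * real k)) * x * d + f x * d)"
      using k by (simp add: field_simps)
    moreover have "(1 + d) * f x ^ n - (x + f x) * (of_nat n * (d * f x ^ (n - Suc 0)))
        = f x ^ (2 * k) * ((1 + d) * f x - (2 * real k + 1) * (x + f x) * d)"
      by (simp add: n_def algebra_simps)
    ultimately have "(1 + d) * f x ^ n - (x + f x) * (of_nat n * (d * f x ^ (n - Suc 0))) = 0"
      using e by simp
    moreover have "((\<lambda>x. (x + f x) / f x ^ n) has_real_derivative
        ((1 + d) * f x ^ n - (x + f x) * (of_nat n * (d * f x ^ (n - Suc 0)))) / (f x ^ n * f x ^ n)) (at x)"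
      using fx by (intro DERIV_divide DERIV_power DERIV_add DERIV_ident d) auto
    ultimately show "((\<lambda>x. (x + f x) / f x ^ n) has_real_derivative 0) (at x within {0<..})"
      by (simp add: has_field_derivative_at_within)
  qed simp
  then show ?thesis
    using nonzero by (auto simp: n_def field_simps)
qed

lemma Psi_expansion_limits:
  fixes f :: "real \<Rightarrow> real"
  assumes k: "k > 0"
    and bo: "(\<lambda>x. f x - (- x + x ^ (2 * k + 1))) \<in> O[at 0](\<lambda>x. x ^ (4 * k + 1))"
  shows "((\<lambda>x. (x + f x) / x ^ (2 * k + 1)) \<longlongrightarrow> 1) (at 0)"
    and "((\<lambda>x. f x / x) \<longlongrightarrow> - 1) (at 0)"
proof -
  define r where "r x = f x - (- x + x ^ (2 * k + 1))" for x
  have "((\<lambda>x. r x / x ^ (2 * k + 1) + 1) \<longlongrightarrow> 0 + 1) (at 0)"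
    using k bo unfolding r_def by (intro tendsto_intros bigo_power_div_tendsto_0[where m="4 * k + 1"]) auto
  moreover have "eventually (\<lambda>x. r x / x ^ (2 * k + 1) + 1 = (x + f x) / x ^ (2 * k + 1)) (at 0)"
    using eventually_neq_at_within[of 0 0 UNIV] by eventually_elim (simp add: r_def field_simps)
  ultimately show "((\<lambda>x. (x + f x) / x ^ (2 * k + 1)) \<longlongrightarrow> 1) (at 0)"
    by (simp add: Lim_transform_eventually)
  have "((\<lambda>x. r x / x ^ 1 - 1 + x ^ (2 * k)) \<longlongrightarrow> 0 - 1 + 0 ^ (2 * k)) (at 0)"
    using k bo unfolding r_def by (intro tendsto_intros bigo_power_div_tendsto_0[where m="4 * k + 1"]) auto
  moreover have "eventually (\<lambda>x. r x / x ^ 1 - 1 + x ^ (2 * k) = f x / x) (at 0)"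
    using eventually_neq_at_within[of 0 0 UNIV] by eventually_elim (simp add: r_def field_simps)
  ultimately show "((\<lambda>x. f x / x) \<longlongrightarrow> - 1) (at 0)"
    using k by (simp add: Lim_transform_eventually zero_power)
qed

lemma Psi_ode_unique:
  fixes f :: "real \<Rightarrow> real"
  assumes k: "k > 0"
    and odd: "\<forall>x. f (- x) = - f x"
    and dec: "\<forall>x y. x < y \<longrightarrow> f y < f x"
    and ode: "\<forall>x. \<exists>d. (f has_real_derivative d) (at x) \<and>
            -(1 / (2 * real k)) * f x + ((2 * real k + 1) / (2 * real k)) * x * d + f x * d = 0"
    and bo: "(\<lambda>x. f x - (- x + x ^ (2 * k + 1))) \<in> O[at 0](\<lambda>x. x ^ (4 * k + 1))"
  shows "f = Psi_implicit k"
proof -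
  define n where "n = 2 * k + 1"
  have f0: "f 0 = 0" using odd[rule_format, of 0] by simp
  have fneg: "f x < 0" if "x > 0" for x using dec that f0 by force
  obtain C where C: "\<And>x. x > 0 \<Longrightarrow> x + f x = C * f x ^ n"
    using Psi_ode_first_integral[OF k ode] fneg unfolding n_def by (metis less_irrefl)
  have "((\<lambda>x. C * (f x / x) ^ n) \<longlongrightarrow> C * (- 1) ^ n) (at_right 0)"
    using Psi_expansion_limits(2)[OF k bo] by (intro tendsto_intros) (simp add: filterlim_at_split)
  moreover have "eventually (\<lambda>x. C * (f x / x) ^ n = (x + f x) / x ^ n) (at_right 0)"
    by (auto simp: eventually_at_right_less C power_divide intro: eventually_mono[OF eventually_at_right_less])
  ultimately have "((\<lambda>x. (x + f x) / x ^ n) \<longlongrightarrow> C * (- 1) ^ n) (at_right 0)"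
    by (rule Lim_transform_eventually)
  moreover have "((\<lambda>x. (x + f x) / x ^ n) \<longlongrightarrow> 1) (at_right 0)"
    using Psi_expansion_limits(1)[OF k bo] by (simp add: n_def filterlim_at_split)
  ultimately have "C * (- 1) ^ n = 1" by (rule tendsto_unique[rotated]) simp
  then have "C = - 1" by (simp add: n_def)
  then have pos: "f x = Psi_implicit k x" if "x > 0" for x
    using C[OF that] by (intro Psi_implicit_eqI[symmetric]) (simp add: Psi_inv_def n_def algebra_simps)
  show ?thesis
  proof
    fix x :: real
    consider "x > 0" | "x = 0" | "x < 0" by linarith
    then show "f x = Psi_implicit k x"
    proof cases
      case 3
      then have "f x = - Psi_implicit k (- x)" using odd pos[of "- x"] by (metis neg_0_less_iff_less minus_minus)
      then show ?thesis by (simp add: Psi_implicit_minus)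
    qed (simp_all add: pos f0)
  qed
qed

lemma Psi_eq_Psi_implicit:
  assumes "k > 0"
  shows "Psi k = Psi_implicit k"
  unfolding Psi_def
proof (rule the_equality)
  show "(\<forall>x. Psi_implicit k (- x) = - Psi_implicit k x) \<and>
      (\<forall>x y. x < y \<longrightarrow> Psi_implicit k y < Psi_implicit k x) \<and>
      real_analytic (Psi_implicit k) \<and>
      (\<forall>x. \<exists>d. (Psi_implicit k has_real_derivative d) (at x) \<and>
            -(1 / (2 * real k)) * Psi_implicit k x + ((2 * real k + 1) / (2 * real k)) * x * d
            + Psi_implicit k x * d = 0) \<and>
      (\<lambda>x. Psi_implicit k x - (- x + x ^ (2 * k + 1))) \<in> O[at 0](\<lambda>x. x ^ (4 * k + 1))"
    using assms Psi_implicit_minus Psi_implicit_strict_antimono real_analytic_Psi_implicit Psi_implicit_ode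
      Psi_implicit_bigo by blast
qed (use assms Psi_ode_unique in blast)

lemma Psi_nonneg: "k > 0 \<Longrightarrow> x \<le> 0 \<Longrightarrow> 0 \<le> Psi k x"
  by (simp add: Psi_eq_Psi_implicit Psi_implicit_nonneg)

lemma Psi_ge_linear:
  assumes k: "k > 0" and x: "4 * real k \<le> x"
  shows "- x / (2 * real k) \<le> Psi k x"
proof -
  define q where "q = - Psi k x"
  have "0 \<le> q" using Psi_nonneg[OF k, of "- x"] x
    by (simp add: q_def Psi_eq_Psi_implicit[OF k] Psi_implicit_minus)
  have xq: "x = q + q * q ^ (2 * k)"
    using Psi_inv_Psi_implicit[of k x] by (simp add: q_def Psi_eq_Psi_implicit[OF k] Psi_inv_def)
  have "2 * real k * q \<le> x"
  proof (cases "q < 2")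
    case True
    then have "2 * real k * q \<le> 2 * real k * 2" using k by (intro mult_left_mono) auto
    then show ?thesis using x by linarith
  next
    case False
    then have "(2::real) ^ (2 * k) \<le> q ^ (2 * k)" by (intro power_mono) auto
    moreover have "real (2 * k) < 2 ^ (2 * k)"
      using of_nat_less_two_power[of "2 * k"] by simp
    ultimately have "q * (2 * real k) \<le> q * q ^ (2 * k)"
      using \<open>0 \<le> q\<close> by (intro mult_left_mono) auto
    then show ?thesis using xq \<open>0 \<le> q\<close> by (simp add: mult.commute)
  qed
  then show ?thesis using k by (simp add: q_def field_simps)
qed

lemma powr_power_alpha:
  assumes "k > 0" "(d::real) > 0"
  shows "(d powr (1 / (2 * real k))) ^ (2 * k + 1) = d powr alpha k"
proof -
  have "(d powr (1 / (2 * real k))) ^ (2 * k + 1) = (d powr (1 / (2 * real k))) powr real (2 * k + 1)"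
    using assms by (subst powr_realpow) auto
  also have "\<dots> = d powr (1 / (2 * real k) * real (2 * k + 1))"
    by (simp add: powr_powr)
  also have "1 / (2 * real k) * real (2 * k + 1) = alpha k"
    using assms by (simp add: alpha_def field_simps)
  finally show ?thesis .
qed

lemma abs_scaled_Psi_le:
  assumes k: "k > 0" and d: "(d::real) > 0"
  shows "\<bar>d powr (1 / (2 * real k)) * Psi k (a / d powr alpha k)\<bar> \<le> max 1 \<bar>a\<bar>"
proof -
  define t where "t = \<bar>d powr (1 / (2 * real k)) * Psi k (a / d powr alpha k)\<bar>"
  have "t ^ (2 * k + 1) = d powr alpha k * \<bar>Psi_implicit k (a / d powr alpha k)\<bar> ^ (2 * k + 1)"
    using powr_power_alpha[OF k d]
    by (simp add: t_def abs_mult power_mult_distrib Psi_eq_Psi_implicit[OF k])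
  also have "\<dots> \<le> d powr alpha k * \<bar>a / d powr alpha k\<bar>"
    by (intro mult_left_mono abs_Psi_implicit_power_le) auto
  also have "\<dots> = \<bar>a\<bar>" using d by (simp add: abs_divide)
  finally have "t ^ (2 * k + 1) \<le> \<bar>a\<bar>" .
  moreover have "t \<le> t ^ (2 * k + 1)" if "1 < t" using that by (intro self_le_power) auto
  ultimately show ?thesis unfolding t_def[symmetric] by linarith
qed

lemma y0_bounds:
  assumes "l \<in> {1..L}" "\<delta> powr (1 / (2 * real (i 1))) \<le> 1"
  shows "0 \<le> y0 i \<delta> l" "y0 i \<delta> l \<le> 3 * real L"
proof -
  have "3 * (real l - 1) * \<delta> powr (1 / (2 * real (i 1))) \<le> 3 * real L * 1"
    using assms by (intro mult_mono) auto
  then show "0 \<le> y0 i \<delta> l" "y0 i \<delta> l \<le> 3 * real L"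
    using assms(1) by (simp_all add: y0_def)
qed

lemma abs_hcoef_le:
  assumes pos: "\<forall>l\<in>{1..L}. i l > 0" and "\<delta> > 0"
    and D: "\<delta> powr (1 / (2 * real (i 1))) \<le> 1" and l: "l \<in> {1..L}"
  shows "\<bar>hcoef L i \<delta> l\<bar> \<le> 6 * real L ^ 2"
proof -
  have term_le: "\<bar>\<delta> powr (1 / (2 * real (i l'))) *
      (Psi (i l') ((y0 i \<delta> l - y0 i \<delta> l') / \<delta> powr alpha (i l'))
       - Psi (i l') (- y0 i \<delta> l' / \<delta> powr alpha (i l')))\<bar> \<le> 6 * real L"
    if l': "l' \<in> {1..L}" for l'
  proof -
    have "\<bar>y0 i \<delta> l - y0 i \<delta> l'\<bar> \<le> 3 * real L" "\<bar>- y0 i \<delta> l'\<bar> \<le> 3 * real L"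
      "1 \<le> 3 * real L"
      using y0_bounds[of l L \<delta> i] y0_bounds[of l' L \<delta> i] D l l' by auto
    then have "\<bar>\<delta> powr (1 / (2 * real (i l'))) *
            Psi (i l') ((y0 i \<delta> l - y0 i \<delta> l') / \<delta> powr alpha (i l'))\<bar>
          + \<bar>\<delta> powr (1 / (2 * real (i l'))) * Psi (i l') (- y0 i \<delta> l' / \<delta> powr alpha (i l'))\<bar>
        \<le> 3 * real L + 3 * real L"
      using abs_scaled_Psi_le[of "i l'" \<delta>] pos l' \<open>\<delta> > 0\<close>
      by (intro add_mono order.trans[OF abs_scaled_Psi_le]) auto
    then show ?thesis
      by (simp add: right_diff_distrib abs_triangle_ineq4[THEN order_trans])
  qed
  have "\<bar>hcoef L i \<delta> l\<bar> \<le> (\<Sum>l'=1..L. 6 * real L)"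
    unfolding hcoef_def by (intro sum_abs[THEN order_trans] sum_mono term_le) auto
  then show ?thesis by (simp add: power2_eq_square)
qed

lemma Ypos_first: "Ypos L i \<delta> 1 s = 0"
  by (simp add: Ypos_def hcoef_def y0_def)

lemma le_powr_root_square:
  assumes "0 < \<delta>" "\<delta> \<le> 1" "k > 0"
  shows "\<delta> \<le> (\<delta> powr (1 / (2 * real k))) ^ 2"
proof -
  have "(\<delta> powr (1 / (2 * real k))) ^ 2 = \<delta> powr (1 / real k)"
    using assms by (simp add: powr_powr flip: powr_realpow)
  also have "\<delta> powr 1 \<le> \<delta> powr (1 / real k)"
    using assms by (intro powr_mono') auto
  finally show ?thesis using assms by simp
qed

lemma Ypos_ge:
  assumes pos: "\<forall>l\<in>{1..L}. i l > 0" and l: "l \<in> {2..L}"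
    and \<delta>: "0 < \<delta>" "\<delta> \<le> 1" and s: "exp (- s) \<le> \<delta>"
    and small: "\<delta> powr (1 / (2 * real (i 1))) \<le> 1 / (24 * real L ^ 2)"
  shows "2 * \<delta> powr (1 / (2 * real (i 1))) * exp (alpha (i 1) * s) \<le> Ypos L i \<delta> l s"
proof -
  define D where "D = \<delta> powr (1 / (2 * real (i 1)))"
  have "1 \<le> real L ^ 2" using l by (simp add: one_le_power)
  then have "1 \<le> 24 * real L ^ 2" by linarith
  then have "1 / (24 * real L ^ 2) \<le> 1" by (auto simp: divide_le_eq_1)
  then have D1: "D \<le> 1" using small unfolding D_def by linarith
  have "3 * D \<le> y0 i \<delta> l"
    using l by (simp add: y0_def D_def mult_right_mono)
  have "\<bar>(\<delta> - exp (- s)) * hcoef L i \<delta> l\<bar> \<le> \<delta> * (6 * real L ^ 2)"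
    using s \<delta> abs_hcoef_le[OF pos \<open>0 < \<delta>\<close>, of l] D1 l
    by (auto simp: abs_mult D_def intro!: mult_mono)
  also have "\<dots> \<le> D ^ 2 * (6 * real L ^ 2)"
    using le_powr_root_square[OF \<delta>, of "i 1"] pos l by (intro mult_right_mono) (auto simp: D_def)
  also have "\<dots> \<le> D / 4"
  proof -
    have "D * (24 * real L ^ 2) \<le> 1" using small l by (simp add: D_def field_simps)
    then have "D * (D * (24 * real L ^ 2)) \<le> D * 1" by (intro mult_left_mono) (auto simp: D_def)
    then show ?thesis by (simp add: power2_eq_square)
  qed
  finally have "2 * D \<le> y0 i \<delta> l + (\<delta> - exp (- s)) * hcoef L i \<delta> l"
    using \<open>3 * D \<le> y0 i \<delta> l\<close> by (simp add: abs_le_iff)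
  then show ?thesis
    unfolding Ypos_def D_def[symmetric] by (simp add: mult.commute)
qed

lemma sum_rescaled_Psi_ge:
  fixes Y :: "nat \<Rightarrow> real"
  assumes L: "L \<ge> 1" and pos: "\<forall>l\<in>{1..L}. i l > 0"
    and Y1: "Y 1 = 0" and Y: "\<And>l. l \<in> {2..L} \<Longrightarrow> X \<le> Y l"
    and X: "4 * real (i 1) \<le> X"
  shows "- X / (2 * real (i 1)) \<le> (\<Sum>l=1..L. exp ((alpha (i 1) - alpha (i l)) * s) *
           Psi (i l) (exp ((alpha (i l) - alpha (i 1)) * s) * (X - Y l)))"
proof -
  have "0 \<le> exp ((alpha (i 1) - alpha (i l)) * s) *
           Psi (i l) (exp ((alpha (i l) - alpha (i 1)) * s) * (X - Y l))" if "l \<in> {2..L}" for l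
    using that pos Y[OF that] by (intro mult_nonneg_nonneg Psi_nonneg mult_nonneg_nonpos) auto
  then have "0 \<le> (\<Sum>l=2..L. exp ((alpha (i 1) - alpha (i l)) * s) *
           Psi (i l) (exp ((alpha (i l) - alpha (i 1)) * s) * (X - Y l)))"
    by (rule sum_nonneg)
  moreover have "- X / (2 * real (i 1)) \<le> Psi (i 1) X"
    using pos L X by (intro Psi_ge_linear) auto
  ultimately show ?thesis
    using L Y1 by (simp add: sum.atLeast_Suc_atMost numeral_2_eq_2)
qed

lemma small_delta_bounds:
  fixes \<delta> c s :: real
  assumes "k > 0" "c > 0" "0 < \<delta>" "\<delta> \<le> min (1 / (4 * real k)) (c powr (2 * real k))"
    and "- ln \<delta> \<le> s"
  shows "\<delta> powr (1 / (2 * real k)) \<le> c" "exp (- s) \<le> \<delta>" "4 * real k \<le> exp s"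
proof -
  have "\<delta> powr (1 / (2 * real k)) \<le> (c powr (2 * real k)) powr (1 / (2 * real k))"
    using assms by (intro powr_mono2) auto
  also have "\<dots> = c" using assms by (simp add: powr_powr)
  finally show "\<delta> powr (1 / (2 * real k)) \<le> c" .
  show "exp (- s) \<le> \<delta>" using assms by (metis exp_le_cancel_iff exp_ln minus_le_iff)
  have "4 * real k \<le> 1 / \<delta>" using assms by (simp add: field_simps)
  also have "1 / \<delta> \<le> exp s" using \<open>exp (- s) \<le> \<delta>\<close> assms by (simp add: exp_minus field_simps)
  finally show "4 * real k \<le> exp s" .
qed

theorem lemma4p5:
  fixes L :: nat and i :: "nat \<Rightarrow> nat"
  assumes "L \<ge> 2" and "\<forall>l\<in>{1..L}. i l > 0"
  shows "\<exists>\<delta>0>0. \<forall>\<delta> s X. 0 < \<delta> \<and> \<delta> \<le> \<delta>0 \<and> \<delta> < 1 \<and> s \<ge> - ln \<delta> \<and>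
            exp s \<le> X \<and> X \<le> 2 * \<delta> powr (1 / (2 * real (i 1))) * exp (alpha (i 1) * s) \<longrightarrow>
            X \<le> alpha (i 1) * X + (\<Sum>l=1..L. exp ((alpha (i 1) - alpha (i l)) * s) *
                   Psi (i l) (exp ((alpha (i l) - alpha (i 1)) * s) * (X - Ypos L i \<delta> l s)))"
proof -
  define c where "c = 1 / (24 * real L ^ 2)"
  define \<delta>0 where "\<delta>0 = min (1 / (4 * real (i 1))) (c powr (2 * real (i 1)))"
  have i1: "i 1 > 0" and "c > 0" using assms by (auto simp: c_def)
  then have "\<delta>0 > 0" by (simp add: \<delta>0_def)
  moreover have "X \<le> alpha (i 1) * X + (\<Sum>l=1..L. exp ((alpha (i 1) - alpha (i l)) * s) *
                   Psi (i l) (exp ((alpha (i l) - alpha (i 1)) * s) * (X - Ypos L i \<delta> l s)))"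
    if \<delta>: "0 < \<delta>" "\<delta> \<le> \<delta>0" "\<delta> < 1" and s: "- ln \<delta> \<le> s"
      and X: "exp s \<le> X" "X \<le> 2 * \<delta> powr (1 / (2 * real (i 1))) * exp (alpha (i 1) * s)"
    for \<delta> s X
  proof -
    note bounds = small_delta_bounds[OF i1 \<open>c > 0\<close> \<delta>(1) \<delta>(2)[unfolded \<delta>0_def] s]
    have "X \<le> Ypos L i \<delta> l s" if "l \<in> {2..L}" for l
      using X(2) Ypos_ge[OF assms(2) that \<delta>(1) _ bounds(2)] bounds(1) \<delta> by (simp add: c_def)
    then have "- X / (2 * real (i 1)) \<le> (\<Sum>l=1..L. exp ((alpha (i 1) - alpha (i l)) * s) *
                   Psi (i l) (exp ((alpha (i l) - alpha (i 1)) * s) * (X - Ypos L i \<delta> l s)))"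
      using assms Ypos_first bounds(3) X(1) by (intro sum_rescaled_Psi_ge) auto
    then show ?thesis by (simp add: alpha_def algebra_simps)
  qed
  ultimately show ?thesis by blast
qed

end
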